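(* Let $f$ be a regular planar discrete curve and $\mathfrak{q}\ne 0$ a space form vector with $\mathfrak{q}\perp\mathfrak{p}$, determining the space form $\mathcal{Q}$. The following are equivalent: (i) $f$ has constant arc-length in $\mathcal{Q}$; (ii) $\mathfrak{f}_i\langle\mathfrak{f}_k,\mathfrak{f}_j\rangle-\mathfrak{f}_k\langle\mathfrak{f}_i,\mathfrak{f}_j\rangle\perp\mathfrak{q}$ for all consecutive vertices $i,j,k$; (iii) the quantity $\frac{\langle\mathfrak{f}_i,\mathfrak{f}_j\rangle}{\langle\mathfrak{f}_i,\mathfrak{q}\rangle\langle\mathfrak{f}_j,\mathfrak{q}\rangle}$ is the same constant $\chi\in\mathbb{R}$ for all edges $(ij)$; (iv) there exists a circle congruence $a\in\mathcal{P}^\pm$ with $\mathfrak{a}_j\in\mathrm{span}\{\mathfrak{f}_j,\mathfrak{q},\mathfrak{p}\}$ for all $j$.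
   Context: Planar light cone model: $\mathbb{R}^{3,2}$ with form of signature $(3,2)$, light cone $\mathcal{L}$; fixed $\mathfrak{p}$ with $\langle\mathfrak{p},\mathfrak{p}\rangle=-1$; $v$ with $\langle\mathfrak{v},\mathfrak{p}\rangle=0$ are points of $\mathbb{R}^2\cup\{\infty\}$, others oriented circles/lines; incidence = orthogonality. A space form vector $\mathfrak{q}\perp\mathfrak{p}$ determines a space form $\mathcal{Q}$ of constant curvature $-\langle\mathfrak{q},\mathfrak{q}\rangle$ (Euclidean if $\langle\mathfrak{q},\mathfrak{q}\rangle=0$, hyperbolic if $>0$ with boundary given by $\mathfrak{q}\pm\sqrt{\langle\mathfrak{q},\mathfrak{q}\rangle}\mathfrak{p}$, spherical if $<0$); its isometries are compositions of M-inversions (inversions $x\mapsto x-\frac{2\langle x,\mathfrak{a}\rangle}{\langle\mathfrak{a},\mathfrak{a}\rangle}\mathfrak{a}$ with $\mathfrak{a}\perp\mathfrak{p}$) fixing $\mathfrak{q}$. A discrete curve $f$ (map from consecutive integers to points) has constant arc-length in $\mathcal{Q}$ if the $\mathcal{Q}$-distance between consecutive points is constant. It is regular if any three consecutive points are pairwise distinct, in the hyperbolic case all points lie on the same side of the boundary, and in the spherical case consecutive points are not antipodal. $\mathcal{P}^\pm_j:=\{\mathfrak{f}_{j-1},\mathfrak{f}_{j+1}\}^\perp\cap\mathcal{L}$ (circles through $f_{j-1},f_{j+1}$); a circle congruence $a\in\mathcal{P}^\pm$ chooses $a_j$ in this pencil at each vertex. *)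

theory Defs
  imports "HOL-Analysis.Analysis"
begin

text \<open>The model space R^{3,2}: real^5 with the symmetric bilinear form of signature (3,2).\<close>

definition lf :: "real^5 \<Rightarrow> real^5 \<Rightarrow> real" where
  "lf x y = x$1 * y$1 + x$2 * y$2 + x$3 * y$3 - x$4 * y$4 - x$5 * y$5"

text \<open>Light cone (nonzero null vectors; lines through them are the elements of Lie geometry).\<close>
definition lightlike :: "real^5 \<Rightarrow> bool" where
  "lightlike x \<longleftrightarrow> x \<noteq> 0 \<and> lf x x = 0"

text \<open>Homogeneous coordinates of a point of R^2 \<union> {\<infinity>}: null vector orthogonal to p.\<close>
definition is_point :: "real^5 \<Rightarrow> real^5 \<Rightarrow> bool" where
  "is_point p x \<longleftrightarrow> lightlike x \<and> lf x p = 0"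

definition same_elem :: "real^5 \<Rightarrow> real^5 \<Rightarrow> bool" where
  "same_elem x y \<longleftrightarrow> (\<exists>c::real. x = c *\<^sub>R y)"

text \<open>Normalised lift into the space form Q = {y null, y \<perp> p, <y,q> = -1}.\<close>
definition nlift :: "real^5 \<Rightarrow> real^5 \<Rightarrow> real^5" where
  "nlift q x = (- 1 / lf x q) *\<^sub>R x"

text \<open>Distance in the space form Q of constant curvature kappa = - <q,q> between the points
  represented by x and y (assumed to lie in Q, i.e. <x,q> and <y,q> nonzero):
  for normalised lifts one has <x^,y^> = -(1 - cos(sqrt kappa d))/kappa, with the
  Euclidean limit <x^,y^> = - d^2/2 and the hyperbolic version <x^,y^> = (1 - cosh(sqrt(-kappa) d))/(-kappa).\<close>
definition Qdist :: "real^5 \<Rightarrow> real^5 \<Rightarrow> real^5 \<Rightarrow> real" where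
  "Qdist q x y =
     (let \<kappa> = - lf q q; c = lf (nlift q x) (nlift q y) in
      if \<kappa> = 0 then sqrt (- 2 * c)
      else if \<kappa> > 0 then arccos (1 + \<kappa> * c) / sqrt \<kappa>
      else arcosh (1 + \<kappa> * c) / sqrt (- \<kappa>))"

text \<open>Two points lie on the same side of the boundary q \<plusminus> sqrt<q,q> p of a hyperbolic space form
  (homogeneous, lift-independent formulation).\<close>
definition same_side :: "real^5 \<Rightarrow> real^5 \<Rightarrow> real^5 \<Rightarrow> bool" where
  "same_side q x y \<longleftrightarrow> lf x y * (lf x q * lf y q) \<le> 0"

text \<open>Antipodal points of a spherical space form: the antipode of the normalised lift x^ is
  -2q/<q,q> - x^.\<close>
definition antipodal :: "real^5 \<Rightarrow> real^5 \<Rightarrow> real^5 \<Rightarrow> bool" where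
  "antipodal q x y \<longleftrightarrow> same_elem y ((- 2 / lf q q) *\<^sub>R q - nlift q x)"

definition consecutive_ints :: "int set \<Rightarrow> bool" where
  "consecutive_ints I \<longleftrightarrow> (\<forall>a b c. a \<in> I \<longrightarrow> c \<in> I \<longrightarrow> a \<le> b \<longrightarrow> b \<le> c \<longrightarrow> b \<in> I)"

definition discrete_curve :: "real^5 \<Rightarrow> int set \<Rightarrow> (int \<Rightarrow> real^5) \<Rightarrow> bool" where
  "discrete_curve p I F \<longleftrightarrow> consecutive_ints I \<and> (\<forall>j\<in>I. is_point p (F j))"

definition regular_curve :: "real^5 \<Rightarrow> real^5 \<Rightarrow> int set \<Rightarrow> (int \<Rightarrow> real^5) \<Rightarrow> bool" where
  "regular_curve p q I F \<longleftrightarrow>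
     discrete_curve p I F \<and>
     (\<forall>j. j - 1 \<in> I \<and> j \<in> I \<and> j + 1 \<in> I \<longrightarrow>
        \<not> same_elem (F (j - 1)) (F j) \<and> \<not> same_elem (F j) (F (j + 1)) \<and>
        \<not> same_elem (F (j - 1)) (F (j + 1))) \<and>
     (lf q q > 0 \<longrightarrow> (\<forall>i\<in>I. \<forall>j\<in>I. same_side q (F i) (F j))) \<and>
     (lf q q < 0 \<longrightarrow> (\<forall>j. j \<in> I \<and> j + 1 \<in> I \<longrightarrow> \<not> antipodal q (F j) (F (j + 1))))"

definition const_arclength :: "real^5 \<Rightarrow> int set \<Rightarrow> (int \<Rightarrow> real^5) \<Rightarrow> bool" where
  "const_arclength q I F \<longleftrightarrow>
     (\<exists>d. \<forall>j. j \<in> I \<and> j + 1 \<in> I \<longrightarrow> Qdist q (F j) (F (j + 1)) = d)"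

text \<open>Pencil P_j of circles through f_{j-1}, f_{j+1}.\<close>
definition pencil :: "(int \<Rightarrow> real^5) \<Rightarrow> int \<Rightarrow> (real^5) set" where
  "pencil F j = {a. lightlike a \<and> lf a (F (j - 1)) = 0 \<and> lf a (F (j + 1)) = 0}"

end

theory Submission
  imports Defs
begin

(* The space-form distance of two points is a function of the inner product of their normalised
   lifts, which is the ratio <f_i,f_j> / (<f_i,q> <f_j,q>), and this function is injective on the
   values such a ratio can take. That range comes from the signature (3,2): vectors orthogonal to
   p and to a non-spacelike q are spacelike. Hence constant arc-length means a constant ratio.
   Condition (ii) at a vertex is the equality of the ratios of its two edges, and along
   consecutive integers local equality is global. For (iv), a = alpha f_j + beta q + gamma p is
   orthogonal to f_(j-1) and f_(j+1) iff (alpha, beta) solves a 2x2 linear system whose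
   determinant is the quantity in (ii); when it vanishes, gamma can be chosen to make a null,
   the discriminant being nonnegative by the same range bound. *)

lemma lf_commute: "lf x y = lf y x"
  by (simp add: lf_def algebra_simps)

lemma lf_add_left: "lf (x + y) z = lf x z + lf y z"
  and lf_add_right: "lf z (x + y) = lf z x + lf z y"
  and lf_diff_left: "lf (x - y) z = lf x z - lf y z"
  and lf_diff_right: "lf z (x - y) = lf z x - lf z y"
  and lf_scaleR_left: "lf (c *\<^sub>R x) z = c * lf x z"
  and lf_scaleR_right: "lf z (c *\<^sub>R x) = c * lf z x"
  and lf_minus_left: "lf (- x) z = - lf x z"
  and lf_minus_right: "lf z (- x) = - lf z x"
  and lf_zero_left: "lf 0 z = 0"
  and lf_zero_right: "lf z 0 = 0"
  by (simp_all add: lf_def algebra_simps)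

lemmas lf_simps = lf_add_left lf_add_right lf_diff_left lf_diff_right lf_scaleR_left lf_scaleR_right
  lf_minus_left lf_minus_right lf_zero_left lf_zero_right

lemma exhaust_5:
  fixes x :: 5
  shows "x = 1 \<or> x = 2 \<or> x = 3 \<or> x = 4 \<or> x = 5"
proof (induct x)
  case (of_int z)
  then have "z = 0 \<or> z = 1 \<or> z = 2 \<or> z = 3 \<or> z = 4" by fastforce
  then show ?case by auto
qed

lemma forall_5: "(\<forall>i::5. P i) \<longleftrightarrow> P 1 \<and> P 2 \<and> P 3 \<and> P 4 \<and> P 5"
  by (metis exhaust_5)

lemma lf_self_eq_sum_squares: "x$4 = 0 \<Longrightarrow> x$5 = 0 \<Longrightarrow> lf x x = (x$1)\<^sup>2 + (x$2)\<^sup>2 + (x$3)\<^sup>2"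
  by (simp add: lf_def power2_eq_square)

lemma lf_nonneg_on_orthogonal_complement:
  assumes u: "lf u u < 0" and v: "lf v v \<le> 0" "v \<noteq> 0" and uv: "lf u v = 0"
    and wu: "lf w u = 0" and wv: "lf w v = 0"
  shows "0 \<le> lf w w"
proof (rule ccontr)
  assume "\<not> 0 \<le> lf w w"
  then have w: "lf w w < 0" by simp
  \<comment> \<open>Some nontrivial combination of u, w, v has vanishing negative coordinates.\<close>
  define r :: "real^3" where "r = vector [u$4, w$4, v$4]"
  define s :: "real^3" where "s = vector [u$5, w$5, v$5]"
  have "card {r, s} \<le> 2"
    by (simp add: card_insert_if)
  then have "dim {r, s} < DIM(real^3)"
    using dim_le_card'[of "{r, s}"] by simp
  then obtain c :: "real^3" where c: "c \<noteq> 0" "orthogonal c r" "orthogonal c s"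
    using orthogonal_to_subspace_exists[of "{r, s}"] by (metis insertCI span_base)
  define z where "z = c$1 *\<^sub>R u + c$2 *\<^sub>R w + c$3 *\<^sub>R v"
  have z45: "z$4 = 0" "z$5 = 0"
    using c by (simp_all add: z_def r_def s_def orthogonal_def inner_vec_def sum_3 mult.commute)
  have "lf v u = 0" "lf u w = 0" "lf v w = 0"
    using uv wu wv lf_commute by metis+
  then have "lf z z = (c$1)\<^sup>2 * lf u u + (c$2)\<^sup>2 * lf w w + (c$3)\<^sup>2 * lf v v"
    using uv wu wv by (simp add: z_def lf_simps power2_eq_square)
  moreover have "(c$1)\<^sup>2 * lf u u \<le> 0" "(c$2)\<^sup>2 * lf w w \<le> 0" "(c$3)\<^sup>2 * lf v v \<le> 0"
    using u v w by (simp_all add: mult_nonneg_nonpos)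
  moreover note lf_self_eq_sum_squares[OF z45]
  ultimately have "(c$1)\<^sup>2 * lf u u = 0" "(c$2)\<^sup>2 * lf w w = 0"
    "(z$1)\<^sup>2 + (z$2)\<^sup>2 + (z$3)\<^sup>2 = 0"
    by (smt (verit) zero_le_power2)+
  then have "c$1 = 0" "c$2 = 0" "z$1 = 0" "z$2 = 0" "z$3 = 0"
    using u w by (simp_all add: add_nonneg_eq_0_iff)
  moreover from this z45 have "z = 0"
    by (simp add: vec_eq_iff forall_5)
  ultimately have "c$3 = 0"
    using v by (simp add: z_def)
  with c \<open>c$1 = 0\<close> \<open>c$2 = 0\<close> show False
    by (simp add: vec_eq_iff forall_3)
qed

lemma lf_nlift: "lf (nlift q x) (nlift q y) = lf x y / (lf x q * lf y q)"
  by (simp add: nlift_def lf_simps)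

lemma nlift_normalised:
  assumes "is_point p x" "lf x q \<noteq> 0"
  shows "lf (nlift q x) (nlift q x) = 0" "lf (nlift q x) p = 0" "lf (nlift q x) q = -1"
  using assms by (simp_all add: is_point_def lightlike_def lf_nlift nlift_def lf_simps)

lemma lf_normalised_bounds:
  assumes p: "lf p p < 0" and q: "q \<noteq> 0" "lf q p = 0" "lf q q \<le> 0"
    and x: "lf x x = 0" "lf x p = 0" "lf x q = -1"
    and y: "lf y y = 0" "lf y p = 0" "lf y q = -1"
  shows "lf x y \<le> 0 \<and> 0 \<le> 2 - lf q q * lf x y"
proof -
  have pq: "lf p q = 0"
    using q lf_commute by metis
  have spacelike: "0 \<le> lf w w" if "lf w p = 0" "lf w q = 0" for w
    using lf_nonneg_on_orthogonal_complement[OF p q(3,1) pq that] .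
  \<comment> \<open>Both x - y and <q,q>(x + y) + 2q are orthogonal to p and q.\<close>
  have "0 \<le> lf (x - y) (x - y)"
    using x y by (intro spacelike) (simp_all add: lf_simps)
  then have xy: "lf x y \<le> 0"
    using x y lf_commute[of y x] by (simp add: lf_simps)
  define w where "w = lf q q *\<^sub>R (x + y) + 2 *\<^sub>R q"
  have "0 \<le> lf w w"
    using x y q(2) pq by (intro spacelike) (simp_all add: w_def lf_simps)
  also have "lf w w = - 2 * lf q q * (2 - lf q q * lf x y)"
  proof -
    have "lf q x = -1" "lf q y = -1" "lf y x = lf x y"
      using x y lf_commute by metis+
    with x y show ?thesis
      by (simp add: w_def lf_simps) (simp add: algebra_simps)
  qed
  finally have "0 \<le> - 2 * lf q q * (2 - lf q q * lf x y)" .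
  with q(3) xy show ?thesis
    by (cases "lf q q = 0") (auto simp: zero_le_mult_iff mult_le_0_iff)
qed

definition lift_dist :: "real \<Rightarrow> real \<Rightarrow> real" where
  "lift_dist \<kappa> c =
     (if \<kappa> = 0 then sqrt (- 2 * c)
      else if \<kappa> > 0 then arccos (1 + \<kappa> * c) / sqrt \<kappa>
      else arcosh (1 + \<kappa> * c) / sqrt (- \<kappa>))"

lemma Qdist_eq_lift_dist: "Qdist q x y = lift_dist (- lf q q) (lf (nlift q x) (nlift q y))"
  by (simp add: Qdist_def lift_dist_def Let_def)

lemma inj_on_lift_dist: "inj_on (lift_dist \<kappa>) {c. c \<le> 0 \<and> 0 \<le> 2 + \<kappa> * c}"
proof (rule inj_onI, clarify)
  fix c d assume c: "c \<le> 0" "0 \<le> 2 + \<kappa> * c" and d: "d \<le> 0" "0 \<le> 2 + \<kappa> * d"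
    and eq: "lift_dist \<kappa> c = lift_dist \<kappa> d"
  have "1 + \<kappa> * c = 1 + \<kappa> * d" if "\<kappa> \<noteq> 0"
  proof (cases "\<kappa> > 0")
    case True
    with c d have "\<bar>1 + \<kappa> * c\<bar> \<le> 1" "\<bar>1 + \<kappa> * d\<bar> \<le> 1"
      by (auto simp: abs_le_iff mult_nonneg_nonpos)
    moreover from eq True have "arccos (1 + \<kappa> * c) = arccos (1 + \<kappa> * d)"
      by (simp add: lift_dist_def)
    ultimately show ?thesis
      by (simp add: arccos_eq_iff)
  next
    case False
    with that c d have "1 \<le> 1 + \<kappa> * c" "1 \<le> 1 + \<kappa> * d"
      by (simp_all add: mult_nonpos_nonpos)
    moreover from eq False that have "arcosh (1 + \<kappa> * c) = arcosh (1 + \<kappa> * d)"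
      by (simp add: lift_dist_def)
    ultimately show ?thesis
      by (metis cosh_arcosh_real)
  qed
  with eq show "c = d"
    by (cases "\<kappa> = 0") (auto simp: lift_dist_def)
qed

lemma ex_const_comp_inj_on_iff:
  assumes inj: "inj_on g S" and range: "\<And>j. P j \<Longrightarrow> h j \<in> S"
  shows "(\<exists>d. \<forall>j. P j \<longrightarrow> g (h j) = d) \<longleftrightarrow> (\<exists>c. \<forall>j. P j \<longrightarrow> h j = c)"
proof
  assume "\<exists>d. \<forall>j. P j \<longrightarrow> g (h j) = d"
  then obtain d where d: "\<And>j. P j \<Longrightarrow> g (h j) = d" by blast
  show "\<exists>c. \<forall>j. P j \<longrightarrow> h j = c"
  proof (cases "\<exists>i. P i")
    case True
    then obtain i where i: "P i" ..
    have "h j = h i" if "P j" for j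
      using inj_onD[OF inj _ range[OF that] range[OF i]] d[OF that] d[OF i] by simp
    then show ?thesis by blast
  next
    case False
    then show ?thesis by blast
  qed
next
  assume "\<exists>c. \<forall>j. P j \<longrightarrow> h j = c"
  then show "\<exists>d. \<forall>j. P j \<longrightarrow> g (h j) = d" by auto
qed

lemma consecutive_ints_edge_const_iff:
  assumes I: "consecutive_ints I"
  shows "(\<exists>c. \<forall>j. j \<in> I \<and> j + 1 \<in> I \<longrightarrow> g j = c)
     \<longleftrightarrow> (\<forall>j. j - 1 \<in> I \<and> j \<in> I \<and> j + 1 \<in> I \<longrightarrow> g (j - 1) = g j)"
proof
  assume local_const: "\<forall>j. j - 1 \<in> I \<and> j \<in> I \<and> j + 1 \<in> I \<longrightarrow> g (j - 1) = g j"
  have propagate: "k \<in> I \<longrightarrow> k + 1 \<in> I \<longrightarrow> g k = g i" if "i \<le> k" "i \<in> I" for i k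
    using that(1)
  proof (induction k rule: int_ge_induct)
    case base
    show ?case by simp
  next
    case (step k)
    show ?case
    proof (intro impI)
      assume "k + 1 \<in> I" "k + 1 + 1 \<in> I"
      moreover from this \<open>i \<in> I\<close> \<open>i \<le> k\<close> I have "k \<in> I"
        unfolding consecutive_ints_def by (meson le_add_same_cancel1 zero_le_one order_trans)
      ultimately show "g (k + 1) = g i"
        using step.IH local_const[rule_format, of "k + 1"] by simp
    qed
  qed
  show "\<exists>c. \<forall>j. j \<in> I \<and> j + 1 \<in> I \<longrightarrow> g j = c"
  proof (cases "\<exists>i. i \<in> I \<and> i + 1 \<in> I")
    case True
    then obtain i where "i \<in> I" "i + 1 \<in> I" by blast
    then have "\<forall>k. k \<in> I \<and> k + 1 \<in> I \<longrightarrow> g k = g i"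
      using propagate by (metis linorder_le_cases)
    then show ?thesis ..
  qed blast
qed (metis diff_add_cancel)

lemma lf_vertex_eq_0_iff_ratio_eq:
  assumes "lf x q \<noteq> 0" "lf y q \<noteq> 0" "lf z q \<noteq> 0"
  shows "lf (lf z y *\<^sub>R x - lf x y *\<^sub>R z) q = 0
     \<longleftrightarrow> lf x y / (lf x q * lf y q) = lf y z / (lf y q * lf z q)"
  using assms by (auto simp: lf_simps lf_commute[of z y] field_simps)

lemma vertex_eq_0_if_null_in_span:
  assumes p: "lf p p \<noteq> 0" "lf x p = 0" "lf z p = 0"
    and a: "lightlike a" "lf a x = 0" "lf a z = 0" "a \<in> span {y, q, p}"
  shows "lf (lf z y *\<^sub>R x - lf x y *\<^sub>R z) q = 0"
proof -
  obtain \<alpha> \<beta> \<gamma> where a_eq: "a = \<alpha> *\<^sub>R y + \<beta> *\<^sub>R q + \<gamma> *\<^sub>R p"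
    using a(4) by (auto simp: span_insert span_singleton algebra_simps)
  have "\<alpha> * lf y x + \<beta> * lf q x = 0" "\<alpha> * lf y z + \<beta> * lf q z = 0"
    using a(2,3) p(2,3) lf_commute[of p] by (simp_all add: a_eq lf_simps)
  then have "\<alpha> * (lf y z * lf q x - lf y x * lf q z) = 0"
    "\<beta> * (lf y z * lf q x - lf y x * lf q z) = 0"
    by algebra+
  moreover have "\<alpha> \<noteq> 0 \<or> \<beta> \<noteq> 0"
  proof (rule ccontr)
    assume "\<not> (\<alpha> \<noteq> 0 \<or> \<beta> \<noteq> 0)"
    then have "a = \<gamma> *\<^sub>R p" by (simp add: a_eq)
    with a(1) p(1) show False by (simp add: lightlike_def lf_simps)
  qed
  ultimately show ?thesis
    by (auto simp: lf_simps lf_commute[of z y] lf_commute[of x y] lf_commute[of q])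
qed

lemma null_in_span_if_vertex_eq_0:
  assumes p: "lf p p = -1" "lf q p = 0" "lf x p = 0" "lf y p = 0" "lf z p = 0"
    and y: "lf y y = 0" "lf y q \<noteq> 0" and x: "lf x q \<noteq> 0"
    and c: "lf x y / (lf x q * lf y q) \<le> 0" "0 \<le> 2 - lf q q * (lf x y / (lf x q * lf y q))"
    and vertex: "lf (lf z y *\<^sub>R x - lf x y *\<^sub>R z) q = 0"
  shows "\<exists>a. lightlike a \<and> lf a x = 0 \<and> lf a z = 0 \<and> a \<in> span {y, q, p}"
proof -
  have comm: "lf p q = 0" "lf p x = 0" "lf p y = 0" "lf p z = 0" "lf q x = lf x q" "lf q y = lf y q"
    "lf q z = lf z q" "lf y x = lf x y" "lf y z = lf z y"
    using p lf_commute by metis+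
  define r where "r = lf x y / (lf x q * lf y q)"
  define disc where "disc = (lf x y)\<^sup>2 * lf q q - 2 * lf x y * lf x q * lf y q"
  have "disc = (lf x q * lf y q)\<^sup>2 * (- r * (2 - lf q q * r))"
    using x y by (simp add: disc_def r_def field_simps power2_eq_square)
  moreover have "0 \<le> - r * (2 - lf q q * r)"
    using c by (intro mult_nonneg_nonneg) (simp_all add: r_def)
  ultimately have "0 \<le> disc"
    by (simp only: zero_le_mult_iff zero_le_power2 simp_thms)
  \<comment> \<open>The first two coefficients make a orthogonal to x; the p-coefficient makes it null.\<close>
  define a where "a = lf x q *\<^sub>R y - lf x y *\<^sub>R q + sqrt disc *\<^sub>R p"
  have "lf a a = disc - (sqrt disc)\<^sup>2"
    using p y comm by (simp add: a_def disc_def lf_simps) (simp add: power2_eq_square algebra_simps)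
  with \<open>0 \<le> disc\<close> have "lf a a = 0" by simp
  moreover have "lf a x = 0" "lf a z = 0"
    using p vertex comm by (simp_all add: a_def lf_simps mult.commute)
  moreover have "a \<noteq> 0"
  proof
    assume "a = 0"
    then have "lf a y = 0" "lf a q = 0" by (simp_all add: lf_simps)
    then have "lf x y * lf y q = 0" "lf x q * lf y q = lf x y * lf q q"
      using p y comm by (simp_all add: a_def lf_simps)
    with x y show False by simp
  qed
  moreover have "a \<in> span {y, q, p}"
    unfolding a_def by (intro span_add span_diff span_scale span_base) auto
  ultimately show ?thesis
    by (auto simp: lightlike_def)
qed

locale space_form_curve =
  fixes p q :: "real^5" and I :: "int set" and F :: "int \<Rightarrow> real^5"
  assumes lf_p_p: "lf p p = -1" and q_nonzero: "q \<noteq> 0" and lf_q_p: "lf q p = 0"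
    and curve: "discrete_curve p I F"
    and in_space_form: "\<And>j. j \<in> I \<Longrightarrow> lf (F j) q \<noteq> 0"
    and hyperbolic_same_side:
      "\<And>j. 0 < lf q q \<Longrightarrow> j \<in> I \<Longrightarrow> j + 1 \<in> I \<Longrightarrow> same_side q (F j) (F (j + 1))"
begin

definition edge_ratio :: "int \<Rightarrow> real" where
  "edge_ratio j = lf (F j) (F (j + 1)) / (lf (F j) q * lf (F (j + 1)) q)"

definition vertex_form :: "int \<Rightarrow> real" where
  "vertex_form j = lf (lf (F (j + 1)) (F j) *\<^sub>R F (j - 1) - lf (F (j - 1)) (F j) *\<^sub>R F (j + 1)) q"

lemma is_point_F: "j \<in> I \<Longrightarrow> is_point p (F j)"
  using curve by (simp add: discrete_curve_def)

lemma edge_ratio_bounds: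
  assumes "j \<in> I" "j + 1 \<in> I"
  shows "edge_ratio j \<le> 0 \<and> 0 \<le> 2 - lf q q * edge_ratio j"
proof (cases "0 < lf q q")
  case True
  with assms hyperbolic_same_side
  have "lf (F j) (F (j + 1)) * (lf (F j) q * lf (F (j + 1)) q) \<le> 0"
    by (simp add: same_side_def)
  then have "edge_ratio j \<le> 0"
    by (simp add: edge_ratio_def divide_le_0_iff mult_le_0_iff)
  moreover from this True have "lf q q * edge_ratio j \<le> 0"
    by (simp add: mult_nonneg_nonpos)
  ultimately show ?thesis
    by linarith
next
  case False
  with assms lf_p_p q_nonzero lf_q_p in_space_form show ?thesis
    using lf_normalised_bounds[OF _ _ _ _ nlift_normalised[OF is_point_F] nlift_normalised[OF is_point_F]]
    by (simp add: edge_ratio_def lf_nlift)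
qed

lemma const_arclength_iff_edge_ratio_const:
  "const_arclength q I F \<longleftrightarrow> (\<exists>c. \<forall>j. j \<in> I \<and> j + 1 \<in> I \<longrightarrow> edge_ratio j = c)"
  unfolding const_arclength_def Qdist_eq_lift_dist lf_nlift edge_ratio_def[symmetric]
  by (rule ex_const_comp_inj_on_iff[OF inj_on_lift_dist]) (use edge_ratio_bounds in auto)

lemma vertex_form_eq_0_iff_edge_ratio_eq:
  assumes "j - 1 \<in> I" "j \<in> I" "j + 1 \<in> I"
  shows "vertex_form j = 0 \<longleftrightarrow> edge_ratio (j - 1) = edge_ratio j"
  using assms in_space_form lf_vertex_eq_0_iff_ratio_eq[of "F (j - 1)" q "F j" "F (j + 1)"]
  by (simp add: vertex_form_def edge_ratio_def)

lemma vertex_form_eq_0_iff_circle: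
  assumes "j - 1 \<in> I" "j \<in> I" "j + 1 \<in> I"
  shows "vertex_form j = 0 \<longleftrightarrow> (\<exists>a. a \<in> pencil F j \<and> a \<in> span {F j, q, p})"
proof -
  have "lf (F i) p = 0" "lf (F i) (F i) = 0" if "i \<in> I" for i
    using is_point_F[OF that] by (simp_all add: is_point_def lightlike_def)
  moreover have "edge_ratio (j - 1) \<le> 0 \<and> 0 \<le> 2 - lf q q * edge_ratio (j - 1)"
    using edge_ratio_bounds[of "j - 1"] assms by simp
  ultimately show ?thesis
    using assms lf_p_p lf_q_p in_space_form
      vertex_eq_0_if_null_in_span[of p "F (j - 1)" "F (j + 1)" _ "F j" q]
      null_in_span_if_vertex_eq_0[of p q "F (j - 1)" "F j" "F (j + 1)"]
    unfolding vertex_form_def pencil_def edge_ratio_def by auto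
qed

end

theorem lemma3p12:
  fixes p q :: "real^5" and I :: "int set" and F :: "int \<Rightarrow> real^5"
  assumes hp: "lf p p = -1"
    and hq0: "q \<noteq> 0" and hqp: "lf q p = 0"
    and hreg: "regular_curve p q I F"
    and hQ: "\<forall>j\<in>I. lf (F j) q \<noteq> 0"
  shows "(const_arclength q I F
          \<longleftrightarrow> (\<forall>j. j - 1 \<in> I \<and> j \<in> I \<and> j + 1 \<in> I \<longrightarrow>
                 lf ((lf (F (j + 1)) (F j)) *\<^sub>R F (j - 1) - (lf (F (j - 1)) (F j)) *\<^sub>R F (j + 1)) q = 0))
       \<and> (const_arclength q I F
          \<longleftrightarrow> (\<exists>chi::real. \<forall>j. j \<in> I \<and> j + 1 \<in> I \<longrightarrow>
                 lf (F j) (F (j + 1)) / (lf (F j) q * lf (F (j + 1)) q) = chi))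
       \<and> (const_arclength q I F
          \<longleftrightarrow> (\<exists>a :: int \<Rightarrow> (real^5). \<forall>j. j - 1 \<in> I \<and> j \<in> I \<and> j + 1 \<in> I \<longrightarrow>
                 a j \<in> pencil F j \<and> a j \<in> span {F j, q, p}))"
proof -
  interpret space_form_curve p q I F
    using hp hq0 hqp hreg hQ by unfold_locales (auto simp: regular_curve_def)
  have consecutive: "consecutive_ints I"
    using curve by (simp add: discrete_curve_def)
  have iii: "const_arclength q I F \<longleftrightarrow> (\<exists>c. \<forall>j. j \<in> I \<and> j + 1 \<in> I \<longrightarrow> edge_ratio j = c)"
    by (rule const_arclength_iff_edge_ratio_const)
  also have "\<dots> \<longleftrightarrow> (\<forall>j. j - 1 \<in> I \<and> j \<in> I \<and> j + 1 \<in> I \<longrightarrow> edge_ratio (j - 1) = edge_ratio j)"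
    by (rule consecutive_ints_edge_const_iff[OF consecutive])
  also have "\<dots> \<longleftrightarrow> (\<forall>j. j - 1 \<in> I \<and> j \<in> I \<and> j + 1 \<in> I \<longrightarrow> vertex_form j = 0)"
    using vertex_form_eq_0_iff_edge_ratio_eq by auto
  finally have ii: "const_arclength q I F \<longleftrightarrow> \<dots>" .
  also have "\<dots> \<longleftrightarrow> (\<forall>j. j - 1 \<in> I \<and> j \<in> I \<and> j + 1 \<in> I \<longrightarrow>
      (\<exists>b. b \<in> pencil F j \<and> b \<in> span {F j, q, p}))"
    using vertex_form_eq_0_iff_circle by auto
  also have "\<dots> \<longleftrightarrow> (\<exists>a. \<forall>j. j - 1 \<in> I \<and> j \<in> I \<and> j + 1 \<in> I \<longrightarrow>
      a j \<in> pencil F j \<and> a j \<in> span {F j, q, p})"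
    by (rule choice_iff')
  finally have iv: "const_arclength q I F \<longleftrightarrow> \<dots>" .
  from ii iii iv show ?thesis
    unfolding vertex_form_def edge_ratio_def by (intro conjI)
qed

end
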